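(* Let $\rho\in(0,1]$, $r,h,p,q\in\mathbb{N}$ with $r\geq 2$, and let $\mathcal{N}$ be a support-preserving Euclidean $\rho$-net on the set of all $h$-sparse unit vectors in $\mathbb{R}^q$. Let $T$ be any $p\times q$ real matrix. Then $$\sup_{\substack{u\in S^{q-1},\\|\mathrm{supp}\,u|\leq h}}\textstyle\max^{(r)}_{\ell\in[p]}|Tu|_\ell\leq 2\sup_{v\in\mathcal{N}}\max^{(\lfloor r/2\rfloor)}_{\ell\in[p]}|Tv|_\ell+\frac{4\rho}{\sqrt{r}}\sup_{\substack{u\in S^{q-1},\\|\mathrm{supp}\,u|\leq h}}\Bigl(\sum_{i=1}^r\bigl(\max^{(i)}_{\ell\in[p]}|Tu|_\ell\bigr)^2\Bigr)^{1/2}.$$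
   Context: A vector is $h$-sparse if it has at most $h$ nonzero coordinates. A subset $\mathcal{N}$ of a set $S\subset\mathbb{R}^q$ is a support-preserving Euclidean $\rho$-net in $S$ if for every $x\in S$ there is $y\in\mathcal{N}$ with $\mathrm{supp}\,y\subset\mathrm{supp}\,x$ and $\|x-y\|\leq\rho$. For $v\in\mathbb{R}^p$, $|v|_\ell$ is the absolute value of its $\ell$-th coordinate. For a non-negative sequence $(a_\ell)_{\ell\in J}$ and $k\in\mathbb{N}$, $\max^{(k)}_{\ell\in J}a_\ell$ denotes its $k$-th largest element ($0$ if $k>|J|$). *)

theory Defs
  imports "HOL-Analysis.Analysis" "HOL-Library.Multiset"
begin

definition supp :: "real ^ 'n \<Rightarrow> 'n set" where
  "supp x = {i. x $ i \<noteq> 0}"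

definition sparse_sphere :: "nat \<Rightarrow> (real ^ 'n) set" where
  "sparse_sphere h = {u. norm u = 1 \<and> card (supp u) \<le> h}"

definition supp_pres_net :: "real \<Rightarrow> (real ^ 'n) set \<Rightarrow> (real ^ 'n) set \<Rightarrow> bool" where
  "supp_pres_net \<rho> N S \<longleftrightarrow> N \<subseteq> S \<and>
     (\<forall>x\<in>S. \<exists>y\<in>N. supp y \<subseteq> supp x \<and> norm (x - y) \<le> \<rho>)"

text \<open>k-th largest element (with multiplicity) of the family a over the finite index
  set J; 0 if k > |J| (and also for k = 0, which is never used).\<close>
definition kth_largest :: "nat \<Rightarrow> 'l set \<Rightarrow> ('l \<Rightarrow> real) \<Rightarrow> real" where
  "kth_largest k J a =
     (let xs = rev (sorted_list_of_multiset (image_mset a (mset_set J)))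
      in if 1 \<le> k \<and> k \<le> length xs then xs ! (k - 1) else 0)"

text \<open>Supremum of a set of nonnegative reals, with the convention sup of empty set = 0.\<close>
definition sup0 :: "real set \<Rightarrow> real" where
  "sup0 A = Sup (insert 0 A)"

end

theory Submission
  imports Defs
begin

text \<open>Write \<open>u = v + w\<close> with \<open>v\<close> a net point, \<open>supp v \<subseteq> supp u\<close> and \<open>norm w \<le> \<rho>\<close>.
  Order statistics satisfy the Weyl-type inequality
  \<open>max^(i+j-1) (a + b) \<le> max^(i) a + max^(j) b\<close>; take \<open>i = r div 2\<close> and
  \<open>j = r - i + 1 \<ge> r/2\<close>.  Support preservation makes \<open>w /\<^sub>R norm w\<close> again an
  \<open>h\<close>-sparse unit vector, and the \<open>j\<close>-th largest entry of any vector is at most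
  \<open>1/sqrt j\<close> times the Euclidean norm of its \<open>r\<close> largest entries.  This yields the
  bound even with the constants \<open>1\<close> and \<open>sqrt 2\<close> in place of \<open>2\<close> and \<open>4\<close>.\<close>

lemma sorted_list_of_image_mset_set:
  fixes a :: "'l \<Rightarrow> real"
  assumes "finite J"
  defines "ys \<equiv> sorted_list_of_multiset (image_mset a (mset_set J))"
  shows "length ys = card J" "sorted ys"
    "card {l\<in>J. P (a l)} = card {i. i < length ys \<and> P (ys ! i)}"
proof -
  have m: "mset ys = image_mset a (mset_set J)" unfolding ys_def by simp
  show "length ys = card J" using arg_cong[OF m, of size] by simp
  show "sorted ys" unfolding ys_def by simp
  have "length (filter P ys) = size (filter_mset P (mset ys))" by (metis mset_filter size_mset)
  also have "\<dots> = card {l\<in>J. P (a l)}" using assms(1) by (simp add: m filter_mset_image_mset)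
  finally show "card {l\<in>J. P (a l)} = card {i. i < length ys \<and> P (ys ! i)}"
    by (simp add: length_filter_conv_card)
qed

lemma kth_largest_eq_nth:
  assumes "finite J" "1 \<le> k" "k \<le> card J"
  shows "kth_largest k J a = sorted_list_of_multiset (image_mset a (mset_set J)) ! (card J - k)"
  using assms sorted_list_of_image_mset_set(1)[OF assms(1), where a=a]
  by (simp add: kth_largest_def Let_def rev_nth)

lemma kth_largest_out_of_range:
  assumes "finite J" "\<not> (1 \<le> k \<and> k \<le> card J)"
  shows "kth_largest k J a = 0"
  using assms(2) sorted_list_of_image_mset_set(1)[OF assms(1), where a=a]
  by (auto simp: kth_largest_def Let_def)

lemma kth_largest_ge_if_card_ge:
  assumes "finite J" "1 \<le> k" "k \<le> card {l\<in>J. t \<le> a l}"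
  shows "t \<le> kth_largest k J a"
proof (rule ccontr)
  have "card {l\<in>J. t \<le> a l} \<le> card J" using assms(1) by (intro card_mono) auto
  hence kJ: "k \<le> card J" using assms by simp
  define ys where "ys = sorted_list_of_multiset (image_mset a (mset_set J))"
  note ys = sorted_list_of_image_mset_set[OF assms(1), where a=a, folded ys_def]
  assume "\<not> t \<le> kth_largest k J a"
  hence lt: "ys ! (card J - k) < t" using kth_largest_eq_nth[OF assms(1,2) kJ] ys_def by simp
  have "{i. i < length ys \<and> t \<le> ys ! i} \<subseteq> {card J - k + 1..<card J}"
  proof
    fix i assume i: "i \<in> {i. i < length ys \<and> t \<le> ys ! i}"
    have "\<not> i \<le> card J - k"
    proof
      assume "i \<le> card J - k"
      hence "ys ! i \<le> ys ! (card J - k)" using sorted_nth_mono[OF ys(2)] ys(1) kJ assms(2) by simp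
      thus False using i lt by simp
    qed
    thus "i \<in> {card J - k + 1..<card J}" using i ys(1) by simp
  qed
  hence "card {i. i < length ys \<and> t \<le> ys ! i} \<le> card {card J - k + 1..<card J}"
    by (intro card_mono) auto
  also have "\<dots> < k" using assms(2) kJ by simp
  finally show False using ys(3)[of "\<lambda>x. t \<le> x"] assms(3) by simp
qed

lemma kth_largest_le_if_card_less:
  assumes "finite J" "card {l\<in>J. t < a l} < k" "0 \<le> t"
  shows "kth_largest k J a \<le> t"
proof (cases "1 \<le> k \<and> k \<le> card J")
  case False
  hence "kth_largest k J a = 0" by (rule kth_largest_out_of_range[OF assms(1)])
  thus ?thesis using assms(3) by simp
next
  case True
  define ys where "ys = sorted_list_of_multiset (image_mset a (mset_set J))"
  note ys = sorted_list_of_image_mset_set[OF assms(1), where a=a, folded ys_def]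
  show ?thesis
  proof (rule ccontr)
    assume "\<not> ?thesis"
    hence gt: "t < ys ! (card J - k)" using kth_largest_eq_nth[OF assms(1)] True ys_def by simp
    have "{card J - k..<card J} \<subseteq> {i. i < length ys \<and> t < ys ! i}"
    proof
      fix i assume i: "i \<in> {card J - k..<card J}"
      hence "ys ! (card J - k) \<le> ys ! i" using sorted_nth_mono[OF ys(2)] ys(1) by simp
      thus "i \<in> {i. i < length ys \<and> t < ys ! i}" using i gt ys(1) by simp
    qed
    hence "card {card J - k..<card J} \<le> card {i. i < length ys \<and> t < ys ! i}"
      by (intro card_mono) auto
    thus False using ys(3)[of "\<lambda>x. t < x"] True assms(2) by simp
  qed
qed

lemma card_gt_kth_largest_less:
  assumes "finite J" "1 \<le> k"
  shows "card {l\<in>J. kth_largest k J a < a l} < k"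
proof (rule ccontr)
  define P where "P = {l\<in>J. kth_largest k J a < a l}"
  assume "\<not> card {l\<in>J. kth_largest k J a < a l} < k"
  hence cP: "k \<le> card P" unfolding P_def by simp
  have fP: "finite P" using assms(1) unfolding P_def by simp
  have "P \<noteq> {}" using cP assms(2) by auto
  then have gt: "kth_largest k J a < Min (a ` P)" using fP by (auto simp: P_def)
  have "P \<subseteq> {l\<in>J. Min (a ` P) \<le> a l}" using fP by (auto simp: P_def)
  hence "card P \<le> card {l\<in>J. Min (a ` P) \<le> a l}" using assms(1) by (intro card_mono) auto
  hence "Min (a ` P) \<le> kth_largest k J a" using kth_largest_ge_if_card_ge[OF assms] cP by simp
  thus False using gt by simp
qed

lemma kth_largest_nonneg:
  assumes "finite J" "\<And>l. 0 \<le> a l"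
  shows "0 \<le> kth_largest k J a"
proof (cases "1 \<le> k \<and> k \<le> card J")
  case True
  have "{l\<in>J. 0 \<le> a l} = J" using assms(2) by auto
  thus ?thesis using kth_largest_ge_if_card_ge[OF assms(1), of k 0 a] True by simp
next
  case False
  thus ?thesis by (simp add: kth_largest_out_of_range[OF assms(1)])
qed

lemma kth_largest_le_bound:
  assumes "finite J" "0 \<le> B" "\<And>l. l \<in> J \<Longrightarrow> a l \<le> B"
  shows "kth_largest k J a \<le> B"
proof (cases "k = 0")
  case False
  have "{l\<in>J. B < a l} = {}" using assms(3) by (auto simp: not_less)
  then have "card {l\<in>J. B < a l} = 0" by (simp only: card.empty)
  thus ?thesis using kth_largest_le_if_card_less[OF assms(1) _ assms(2), of a k] False by simp
qed (simp add: kth_largest_def assms(2))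

lemma kth_largest_antimono:
  assumes "finite J" "1 \<le> i" "i \<le> j" "\<And>l. 0 \<le> a l"
  shows "kth_largest j J a \<le> kth_largest i J a"
  using card_gt_kth_largest_less[OF assms(1,2), of a] assms(3)
  by (intro kth_largest_le_if_card_less kth_largest_nonneg assms(1,4)) simp

lemma kth_largest_le_scaled:
  assumes "finite J" "1 \<le> k" "0 \<le> c" "\<And>l. 0 \<le> a l" "\<And>l. b l \<le> c * a l"
  shows "kth_largest k J b \<le> c * kth_largest k J a"
proof (rule kth_largest_le_if_card_less[OF assms(1)])
  show "0 \<le> c * kth_largest k J a" using kth_largest_nonneg[OF assms(1,4)] assms(3) by simp
  have "{l\<in>J. c * kth_largest k J a < b l} \<subseteq> {l\<in>J. kth_largest k J a < a l}"
  proof safe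
    fix l assume "c * kth_largest k J a < b l"
    hence "c * kth_largest k J a < c * a l" using assms(5)[of l] by linarith
    thus "kth_largest k J a < a l" using assms(3) by (simp add: mult_less_cancel_left)
  qed
  hence "card {l\<in>J. c * kth_largest k J a < b l} \<le> card {l\<in>J. kth_largest k J a < a l}"
    using assms(1) by (intro card_mono) auto
  thus "card {l\<in>J. c * kth_largest k J a < b l} < k"
    using card_gt_kth_largest_less[OF assms(1,2), of a] by simp
qed

text \<open>If \<open>c \<le> a + b\<close> exceeds \<open>max^(i) a + max^(j) b\<close> at \<open>l\<close>, then \<open>a l\<close> or \<open>b l\<close> exceeds its
  threshold, and fewer than \<open>i\<close> resp. \<open>j\<close> indices do so.\<close>
lemma kth_largest_add_le:
  assumes "finite J" "1 \<le> i" "1 \<le> j" "\<And>l. 0 \<le> a l" "\<And>l. 0 \<le> b l"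
    "\<And>l. c l \<le> a l + b l"
  shows "kth_largest (i + j - 1) J c \<le> kth_largest i J a + kth_largest j J b"
proof (rule kth_largest_le_if_card_less[OF assms(1)])
  let ?A = "{l\<in>J. kth_largest i J a < a l}" and ?B = "{l\<in>J. kth_largest j J b < b l}"
  show "0 \<le> kth_largest i J a + kth_largest j J b"
    using kth_largest_nonneg[OF assms(1,4)] kth_largest_nonneg[OF assms(1,5)] by (simp add: add_nonneg_nonneg)
  have "{l\<in>J. kth_largest i J a + kth_largest j J b < c l} \<subseteq> ?A \<union> ?B"
  proof -
    have "kth_largest i J a < a l \<or> kth_largest j J b < b l"
      if "kth_largest i J a + kth_largest j J b < c l" for l
      using that assms(6)[of l] by linarith
    thus ?thesis by blast
  qed
  hence "card {l\<in>J. kth_largest i J a + kth_largest j J b < c l} \<le> card (?A \<union> ?B)"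
    using assms(1) by (intro card_mono) auto
  also have "\<dots> \<le> card ?A + card ?B" by (rule card_Un_le)
  finally show "card {l\<in>J. kth_largest i J a + kth_largest j J b < c l} < i + j - 1"
    using card_gt_kth_largest_less[OF assms(1,2), of a] card_gt_kth_largest_less[OF assms(1,3), of b]
    by simp
qed

lemma sqrt_mult_kth_largest_le:
  assumes "finite J" "1 \<le> j" "j \<le> r" "\<And>l. 0 \<le> a l"
  shows "sqrt (real j) * kth_largest j J a \<le> sqrt (\<Sum>i=1..r. (kth_largest i J a)\<^sup>2)"
proof -
  have "real j * (kth_largest j J a)\<^sup>2 = (\<Sum>i=1..j. (kth_largest j J a)\<^sup>2)" by simp
  also have "\<dots> \<le> (\<Sum>i=1..j. (kth_largest i J a)\<^sup>2)"
    using kth_largest_antimono[OF assms(1) _ _ assms(4)] kth_largest_nonneg[OF assms(1,4)]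
    by (intro sum_mono power_mono) auto
  also have "\<dots> \<le> (\<Sum>i=1..r. (kth_largest i J a)\<^sup>2)"
    using assms(3) by (intro sum_mono2) auto
  finally have "sqrt (real j * (kth_largest j J a)\<^sup>2) \<le> sqrt (\<Sum>i=1..r. (kth_largest i J a)\<^sup>2)"
    by (rule real_sqrt_le_mono)
  thus ?thesis using kth_largest_nonneg[OF assms(1,4)] by (simp add: real_sqrt_mult)
qed

lemma sup0_upper: "bdd_above A \<Longrightarrow> x \<in> A \<Longrightarrow> x \<le> sup0 A"
  unfolding sup0_def by (rule cSup_upper) auto

lemma sup0_nonneg: "bdd_above A \<Longrightarrow> 0 \<le> sup0 A"
  unfolding sup0_def by (rule cSup_upper) auto

lemma sup0_least: "0 \<le> B \<Longrightarrow> (\<And>x. x \<in> A \<Longrightarrow> x \<le> B) \<Longrightarrow> sup0 A \<le> B"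
  unfolding sup0_def by (rule cSup_least) auto

lemma sparse_sphere_normalize:
  assumes "u \<in> sparse_sphere h" "supp w \<subseteq> supp u" "w \<noteq> 0"
  shows "w /\<^sub>R norm w \<in> sparse_sphere h"
proof -
  have "supp (w /\<^sub>R norm w) = supp w" using assms(3) by (auto simp: supp_def)
  thus ?thesis using assms card_mono[OF _ assms(2)] by (auto simp: sparse_sphere_def)
qed

lemma kth_largest_abs_mult_vec_le_norm:
  fixes T :: "real ^ 'q ^ 'p"
  obtains B where "0 < B" "\<And>k x. kth_largest k UNIV (\<lambda>l. \<bar>(T *v x) $ l\<bar>) \<le> B * norm x"
proof -
  obtain B where B: "0 < B" "\<And>x. norm (T *v x) \<le> norm x * B"
    using bounded_linear.pos_bounded[OF matrix_vector_mul_bounded_linear[of T]] by blast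
  have "kth_largest k UNIV (\<lambda>l. \<bar>(T *v x) $ l\<bar>) \<le> B * norm x" for k x
  proof (rule kth_largest_le_bound)
    show "\<bar>(T *v x) $ l\<bar> \<le> B * norm x" for l
      using component_le_norm_cart[of "T *v x" l] B(2)[of x] by (simp add: mult.commute)
  qed (use B(1) in simp_all)
  with B(1) that show ?thesis by blast
qed

lemma kth_largest_abs_mult_vec_add:
  fixes T :: "real ^ 'q ^ 'p"
  assumes "1 \<le> i" "1 \<le> j"
  shows "kth_largest (i + j - 1) UNIV (\<lambda>l. \<bar>(T *v (v + w)) $ l\<bar>)
    \<le> kth_largest i UNIV (\<lambda>l. \<bar>(T *v v) $ l\<bar>) + kth_largest j UNIV (\<lambda>l. \<bar>(T *v w) $ l\<bar>)"
  by (rule kth_largest_add_le) (use assms in \<open>auto simp: matrix_vector_right_distrib\<close>)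

lemma kth_largest_abs_mult_vec_scaleR:
  fixes T :: "real ^ 'q ^ 'p"
  assumes "1 \<le> k"
  shows "kth_largest k UNIV (\<lambda>l. \<bar>(T *v (c *\<^sub>R x)) $ l\<bar>)
    \<le> \<bar>c\<bar> * kth_largest k UNIV (\<lambda>l. \<bar>(T *v x) $ l\<bar>)"
  by (rule kth_largest_le_scaled) (use assms in \<open>auto simp: matrix_vector_mult_scaleR abs_mult\<close>)

lemma kth_largest_abs_mult_vec_net_split:
  fixes T :: "real ^ 'q ^ 'p"
  defines "K \<equiv> \<lambda>k x. kth_largest k UNIV (\<lambda>l. \<bar>(T *v x) $ l\<bar>)"
  assumes "2 \<le> r" "0 \<le> \<rho>" "0 \<le> S"
    and u: "u \<in> sparse_sphere h" and v: "supp v \<subseteq> supp u" "norm (u - v) \<le> \<rho>"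
    and S: "\<And>x. x \<in> sparse_sphere h \<Longrightarrow> sqrt (\<Sum>i=1..r. (K i x)\<^sup>2) \<le> S"
  shows "K r u \<le> K (r div 2) v + \<rho> * sqrt 2 / sqrt (real r) * S"
proof -
  define w where "w = u - v"
  define j where "j = r - r div 2 + 1"
  have j: "1 \<le> j" "j \<le> r" "real r \<le> 2 * real j" using assms(2) unfolding j_def by auto
  have r_eq: "r div 2 + j - 1 = r" using assms(2) unfolding j_def by simp
  have "K r u \<le> K (r div 2) v + K j w"
    using kth_largest_abs_mult_vec_add[of "r div 2" j T v w] assms(2) j(1)
    unfolding K_def w_def r_eq by simp
  moreover have "K j w \<le> \<rho> * (sqrt 2 / sqrt (real r) * S)"
  proof (cases "w = 0")
    case True
    then show ?thesis using assms(3,4)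
      by (simp add: K_def kth_largest_le_bound)
  next
    case False
    define w' where "w' = w /\<^sub>R norm w"
    have w': "w' \<in> sparse_sphere h"
    proof -
      have "supp w \<subseteq> supp u" using v(1) unfolding w_def supp_def by auto
      thus ?thesis using sparse_sphere_normalize[OF u _ False] unfolding w'_def by simp
    qed
    have "K j w \<le> norm w * K j w'"
      using kth_largest_abs_mult_vec_scaleR[OF j(1), of T "norm w" w'] False
      unfolding K_def w'_def by simp
    also have "\<dots> \<le> \<rho> * K j w'"
      using v(2) kth_largest_nonneg[of UNIV "\<lambda>l. \<bar>(T *v w') $ l\<bar>"]
      unfolding w_def K_def by (intro mult_right_mono) auto
    also have "K j w' \<le> S / sqrt (real j)"
      using sqrt_mult_kth_largest_le[OF _ j(1,2), of UNIV "\<lambda>l. \<bar>(T *v w') $ l\<bar>"] S[OF w'] j(1)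
      unfolding K_def by (simp add: field_simps)
    also have "S / sqrt (real j) \<le> sqrt 2 / sqrt (real r) * S"
    proof -
      have "sqrt (real r) \<le> sqrt 2 * sqrt (real j)"
        using j(3) by (simp add: real_sqrt_mult[symmetric])
      thus ?thesis using j(1) assms(2,4) by (simp add: field_simps mult_left_mono)
    qed
    finally show ?thesis using assms(3) by (simp add: mult_left_mono)
  qed
  ultimately show ?thesis by simp
qed

lemma bdd_above_kth_largest_abs_mult_vec:
  fixes T :: "real ^ 'q ^ 'p"
  assumes "U \<subseteq> sparse_sphere h"
  shows "bdd_above ((\<lambda>u. kth_largest k UNIV (\<lambda>l. \<bar>(T *v u) $ l\<bar>)) ` U)"
proof -
  obtain B where B: "\<And>k x. kth_largest k UNIV (\<lambda>l. \<bar>(T *v x) $ l\<bar>) \<le> B * norm x"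
    using kth_largest_abs_mult_vec_le_norm[of T] by blast
  have "kth_largest k UNIV (\<lambda>l. \<bar>(T *v u) $ l\<bar>) \<le> B" if "u \<in> U" for u
    using B[of k u] assms that by (auto simp: sparse_sphere_def)
  then show ?thesis by (intro bdd_aboveI) blast
qed

lemma bdd_above_sqrt_sum_kth_largest_abs_mult_vec:
  fixes T :: "real ^ 'q ^ 'p"
  shows "bdd_above ((\<lambda>u. sqrt (\<Sum>i=1..r. (kth_largest i UNIV (\<lambda>l. \<bar>(T *v u) $ l\<bar>))\<^sup>2))
    ` sparse_sphere h)"
proof -
  obtain B where B: "\<And>k x. kth_largest k UNIV (\<lambda>l. \<bar>(T *v x) $ l\<bar>) \<le> B * norm x"
    using kth_largest_abs_mult_vec_le_norm[of T] by blast
  have "sqrt (\<Sum>i=1..r. (kth_largest i UNIV (\<lambda>l. \<bar>(T *v u) $ l\<bar>))\<^sup>2) \<le> sqrt (real r * B\<^sup>2)"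
    if "u \<in> sparse_sphere h" for u
  proof -
    have "(\<Sum>i=1..r. (kth_largest i UNIV (\<lambda>l. \<bar>(T *v u) $ l\<bar>))\<^sup>2) \<le> (\<Sum>i=1..r. B\<^sup>2)"
      using B[of _ u] that
      by (intro sum_mono power_mono) (auto simp: kth_largest_nonneg sparse_sphere_def)
    thus ?thesis by simp
  qed
  then show ?thesis by (intro bdd_aboveI) blast
qed

theorem lemma4p3:
  fixes \<rho> :: real and r h :: nat
    and N :: "(real ^ 'q) set"
    and T :: "real ^ 'q ^ 'p"
  assumes "0 < \<rho>" and "\<rho> \<le> 1" and "r \<ge> 2"
    and "supp_pres_net \<rho> N (sparse_sphere h)"
  shows "sup0 ((\<lambda>u. kth_largest r UNIV (\<lambda>l. \<bar>(T *v u) $ l\<bar>)) ` sparse_sphere h)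
    \<le> 2 * sup0 ((\<lambda>v. kth_largest (r div 2) UNIV (\<lambda>l. \<bar>(T *v v) $ l\<bar>)) ` N)
      + 4 * \<rho> / sqrt (real r) *
        sup0 ((\<lambda>u. sqrt (\<Sum>i=1..r. (kth_largest i UNIV (\<lambda>l. \<bar>(T *v u) $ l\<bar>))\<^sup>2))
               ` sparse_sphere h)"
proof -
  let ?K = "\<lambda>k u. kth_largest k UNIV (\<lambda>l. \<bar>(T *v u) $ l\<bar>)"
  let ?Q = "\<lambda>u. sqrt (\<Sum>i=1..r. (?K i u)\<^sup>2)"
  define A where "A = sup0 (?K (r div 2) ` N)"
  define S where "S = sup0 (?Q ` sparse_sphere h)"
  have "N \<subseteq> sparse_sphere h" using assms(4) by (simp add: supp_pres_net_def)
  then have bddA: "bdd_above (?K (r div 2) ` N)" by (rule bdd_above_kth_largest_abs_mult_vec)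
  note bddS = bdd_above_sqrt_sum_kth_largest_abs_mult_vec[of T r h]
  have A: "0 \<le> A" and S: "0 \<le> S"
    unfolding A_def S_def using bddA bddS by (simp_all add: sup0_nonneg)
  have "?K r u \<le> A + \<rho> * sqrt 2 / sqrt (real r) * S" if u: "u \<in> sparse_sphere h" for u
  proof -
    obtain v where v: "v \<in> N" "supp v \<subseteq> supp u" "norm (u - v) \<le> \<rho>"
      using assms(4) u unfolding supp_pres_net_def by blast
    have "\<And>x. x \<in> sparse_sphere h \<Longrightarrow> ?Q x \<le> S"
      unfolding S_def using bddS by (simp add: sup0_upper)
    then have "?K r u \<le> ?K (r div 2) v + \<rho> * sqrt 2 / sqrt (real r) * S"
      using assms(1) by (intro kth_largest_abs_mult_vec_net_split[OF assms(3) _ S u v(2,3)]) simp_all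
    moreover have "?K (r div 2) v \<le> A" unfolding A_def using bddA v(1) by (simp add: sup0_upper)
    ultimately show ?thesis by simp
  qed
  then have "sup0 (?K r ` sparse_sphere h) \<le> A + \<rho> * sqrt 2 / sqrt (real r) * S"
    using A S assms(1) by (intro sup0_least) auto
  also have "\<dots> \<le> 2 * A + 4 * \<rho> / sqrt (real r) * S"
  proof -
    have "\<rho> * sqrt 2 \<le> 4 * \<rho>" using assms(1) real_sqrt_le_mono[of 2 "4\<^sup>2"] by simp
    then have "\<rho> * sqrt 2 / sqrt (real r) * S \<le> 4 * \<rho> / sqrt (real r) * S"
      using S by (intro mult_right_mono divide_right_mono) simp_all
    moreover have "A \<le> 2 * A" using A by simp
    ultimately show ?thesis by (rule add_mono[rotated])
  qed
  finally show ?thesis unfolding A_def S_def .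
qed

end
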